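(* Let $\mathscr{C}\subseteq\mathrm{GF}(4)^n$ be a scalable code. The following are equivalent: (i) $\mathrm{Im}_{\mathscr{B}}(\mathscr{C})\subseteq\mathrm{GF}(2)^{2n}$ is self-orthogonal w.r.t. the canonical inner product $\sum_{i=1}^{2n}x_iy_i$ for some basis $\mathscr{B}$ of $\mathrm{GF}(4)$ over $\mathrm{GF}(2)$; (ii) $\mathrm{Im}_{\mathscr{B}}(\mathscr{C})$ is self-orthogonal w.r.t. the canonical inner product for all bases $\mathscr{B}$ of $\mathrm{GF}(4)$ over $\mathrm{GF}(2)$; (iii) $\mathscr{C}$ is self-orthogonal w.r.t. the canonical inner product $\sum_{i=1}^n x_iy_i$ on $\mathrm{GF}(4)^n$.
   Context: $\mathrm{Tr}:\mathrm{GF}(4)\to\mathrm{GF}(2)$, $\mathrm{Tr}(a)=a+a^2$. The dual basis of a basis $\{\gamma_1,\gamma_2\}$ of $\mathrm{GF}(4)$ over $\mathrm{GF}(2)$ is the unique basis $\{\beta_1,\beta_2\}$ with $\mathrm{Tr}(\gamma_i\beta_j)=\delta_{ij}$. A code $\mathscr{C}\subseteq\mathrm{GF}(4)^n$ is scalable if $x\in\mathscr{C}\Rightarrow\alpha x\in\mathscr{C}$ for all $\alpha\in\mathrm{GF}(4)$. For a basis $\mathscr{B}$ with dual basis $\{\beta_1,\beta_2\}$, $\mathrm{Im}_{\mathscr{B}}(\mathscr{C})=\{(\mathrm{Tr}(\beta_1x_1),\ldots,\mathrm{Tr}(\beta_1x_n),\mathrm{Tr}(\beta_2x_1),\ldots,\mathrm{Tr}(\beta_2x_n)):x\in\mathscr{C}\}$.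 A code $D$ is self-orthogonal w.r.t. a form $g$ if $g(x,y)=0$ for all $x,y\in D$. *)

theory Defs
  imports Main "HOL-Library.Z2"
begin

section \<open>The field GF(4) = {0, 1, w, w^2} with w^2 = w + 1\<close>

datatype gf4 = G0 | G1 | Gw | Gw2

instantiation gf4 :: field
begin

definition zero_gf4 :: gf4 where "0 = G0"
definition one_gf4 :: gf4 where "1 = G1"

fun plus_gf4 :: "gf4 \<Rightarrow> gf4 \<Rightarrow> gf4" where
  "plus_gf4 G0 y = y"
| "plus_gf4 x G0 = x"
| "plus_gf4 G1 G1 = G0"
| "plus_gf4 G1 Gw = Gw2"
| "plus_gf4 G1 Gw2 = Gw"
| "plus_gf4 Gw G1 = Gw2"
| "plus_gf4 Gw Gw = G0"
| "plus_gf4 Gw Gw2 = G1"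
| "plus_gf4 Gw2 G1 = Gw"
| "plus_gf4 Gw2 Gw = G1"
| "plus_gf4 Gw2 Gw2 = G0"

definition uminus_gf4 :: "gf4 \<Rightarrow> gf4" where "uminus_gf4 x = x"
definition minus_gf4 :: "gf4 \<Rightarrow> gf4 \<Rightarrow> gf4" where "minus_gf4 x y = x + y"

fun times_gf4 :: "gf4 \<Rightarrow> gf4 \<Rightarrow> gf4" where
  "times_gf4 G0 y = G0"
| "times_gf4 x G0 = G0"
| "times_gf4 G1 y = y"
| "times_gf4 x G1 = x"
| "times_gf4 Gw Gw = Gw2"
| "times_gf4 Gw Gw2 = G1"
| "times_gf4 Gw2 Gw = G1"
| "times_gf4 Gw2 Gw2 = Gw"

definition inverse_gf4 :: "gf4 \<Rightarrow> gf4" where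
  "inverse_gf4 x = (case x of G0 \<Rightarrow> G0 | G1 \<Rightarrow> G1 | Gw \<Rightarrow> Gw2 | Gw2 \<Rightarrow> Gw)"

definition divide_gf4 :: "gf4 \<Rightarrow> gf4 \<Rightarrow> gf4" where "divide_gf4 x y = x * inverse y"

instance
proof
  fix a b c :: gf4
  show "a + b + c = a + (b + c)" by (cases a; cases b; cases c) simp_all
  show "a + b = b + a" by (cases a; cases b) simp_all
  show "0 + a = a" by (simp add: zero_gf4_def)
  show "- a + a = 0" by (cases a) (simp_all add: uminus_gf4_def zero_gf4_def)
  show "a - b = a + - b" by (simp add: minus_gf4_def uminus_gf4_def)
  show "a * b * c = a * (b * c)" by (cases a; cases b; cases c) simp_all
  show "a * b = b * a" by (cases a; cases b) simp_all
  show "1 * a = a" by (cases a) (simp_all add: one_gf4_def)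
  show "(a + b) * c = a * c + b * c" by (cases a; cases b; cases c) simp_all
  show "(0::gf4) \<noteq> 1" by (simp add: zero_gf4_def one_gf4_def)
  show "a \<noteq> 0 \<Longrightarrow> inverse a * a = 1" by (cases a) (simp_all add: zero_gf4_def one_gf4_def inverse_gf4_def)
  show "divide a b = a * inverse b" by (simp add: divide_gf4_def)
  show "inverse (0::gf4) = 0" by (simp add: zero_gf4_def inverse_gf4_def)
qed

end

definition emb2 :: "bit \<Rightarrow> gf4" where
  "emb2 b = (if b = 0 then 0 else 1)"

text \<open>Tr(a) = a + a^2, which always lies in the prime field GF(2).\<close>
definition tr :: "gf4 \<Rightarrow> bit" where
  "tr a = (if a + a ^ 2 = 0 then 0 else 1)"

lemma emb2_tr: "emb2 (tr a) = a + a ^ 2"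
  by (cases a) (simp_all add: emb2_def tr_def power2_eq_square zero_gf4_def one_gf4_def)

definition is_basis :: "gf4 \<Rightarrow> gf4 \<Rightarrow> bool" where
  "is_basis g1 g2 \<longleftrightarrow> (\<forall>x. \<exists>!(a, b). x = emb2 a * g1 + emb2 b * g2)"

definition is_dual_basis :: "gf4 \<Rightarrow> gf4 \<Rightarrow> gf4 \<Rightarrow> gf4 \<Rightarrow> bool" where
  "is_dual_basis g1 g2 b1 b2 \<longleftrightarrow> is_basis b1 b2 \<and>
     tr (g1 * b1) = 1 \<and> tr (g1 * b2) = 0 \<and> tr (g2 * b1) = 0 \<and> tr (g2 * b2) = 1"

text \<open>Vectors of GF(q)^n are lists of length n.\<close>

definition scalable :: "gf4 list set \<Rightarrow> bool" where
  "scalable C \<longleftrightarrow> (\<forall>x\<in>C. \<forall>\<alpha>::gf4. map (\<lambda>xi. \<alpha> * xi) x \<in> C)"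

definition inner :: "'a::comm_semiring_1 list \<Rightarrow> 'a list \<Rightarrow> 'a" where
  "inner x y = sum_list (map2 (*) x y)"

definition self_orthogonal :: "'a::comm_semiring_1 list set \<Rightarrow> bool" where
  "self_orthogonal D \<longleftrightarrow> (\<forall>x\<in>D. \<forall>y\<in>D. inner x y = 0)"

text \<open>Image of a code under the basis with dual basis (b1, b2).\<close>
definition Im :: "gf4 \<Rightarrow> gf4 \<Rightarrow> gf4 list set \<Rightarrow> bit list set" where
  "Im b1 b2 C = (\<lambda>x. map (\<lambda>xi. tr (b1 * xi)) x @ map (\<lambda>xi. tr (b2 * xi)) x) ` C"

end

theory Submission
  imports Defs
begin

text \<open>For \<open>b \<noteq> 0\<close> we have \<open>b\<^sup>3 = 1\<close>, so \<open>Tr(b x) Tr(b y) = Tr(b\<^sup>2 x y) + Tr(x y\<^sup>2)\<close>.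
  Summing this over the two elements \<open>\<beta>\<^sub>1, \<beta>\<^sub>2\<close> of a dual basis, the second terms cancel in
  characteristic 2, so the binary inner product of the images of \<open>x\<close> and \<open>y\<close> is
  \<open>Tr(\<lambda> \<langle>x, y\<rangle>)\<close> with \<open>\<lambda> = \<beta>\<^sub>1\<^sup>2 + \<beta>\<^sub>2\<^sup>2 = (\<beta>\<^sub>1 + \<beta>\<^sub>2)\<^sup>2 \<noteq> 0\<close>.
  As \<open>C\<close> is scalable, \<open>\<langle>x, y\<rangle>\<close> may be replaced by any of its multiples, and the trace
  form is nondegenerate; hence, for every basis, the image of \<open>C\<close> is self-orthogonal
  iff \<open>C\<close> is.\<close>

lemma gf4_all: "(\<forall>a::gf4. P a) \<longleftrightarrow> P G0 \<and> P G1 \<and> P Gw \<and> P Gw2"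
  by (metis gf4.exhaust)

lemma bit_all: "(\<forall>a::bit. P a) \<longleftrightarrow> P 0 \<and> P 1"
  by (metis bit.exhaust)

lemma bit_ex: "(\<exists>a::bit. P a) \<longleftrightarrow> P 0 \<or> P 1"
  by (metis bit.exhaust)

lemmas gf4_eval = zero_gf4_def one_gf4_def power2_eq_square tr_def emb2_def

lemma tr_zero [simp]: "tr 0 = 0"
  by (simp add: tr_def)

lemma tr_add: "tr (a + b) = tr a + tr b"
  by (cases a; cases b) (simp_all add: gf4_eval)

lemma tr_sum_list: "tr (sum_list xs) = sum_list (map tr xs)"
  by (induction xs) (simp_all add: tr_add)

lemma tr_nondegenerate:
  assumes "\<And>\<alpha>. tr (\<alpha> * s) = 0"
  shows "s = 0"
  using assms[of 1] assms[of Gw] by (cases s) (simp_all add: gf4_eval)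

lemma tr_mult_tr_mult:
  "b \<noteq> 0 \<Longrightarrow> tr (b * a) * tr (b * c) = tr (b^2 * a * c) + tr (a * c^2)"
  by (cases b; cases a; cases c) (simp_all add: gf4_eval)

lemma tr_mult_tr_mult_add:
  assumes "b1 \<noteq> 0" "b2 \<noteq> 0"
  shows "tr (b1 * a) * tr (b1 * c) + tr (b2 * a) * tr (b2 * c) = tr ((b1^2 + b2^2) * a * c)"
proof -
  have "tr (b1 * a) * tr (b1 * c) + tr (b2 * a) * tr (b2 * c)
      = tr (b1^2 * a * c) + tr (b2^2 * a * c) + (tr (a * c^2) + tr (a * c^2))"
    by (simp only: tr_mult_tr_mult[OF assms(1)] tr_mult_tr_mult[OF assms(2)] add_ac)
  also have "\<dots> = tr ((b1^2 + b2^2) * a * c)"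
    by (simp del: add_bit_eq_xor mult_bit_eq_and add: distrib_right tr_add)
  finally show ?thesis .
qed

lemma add_squares_neq_zero: "(b1::gf4) \<noteq> b2 \<Longrightarrow> b1^2 + b2^2 \<noteq> 0"
  by (cases b1; cases b2) (simp_all add: gf4_eval)

lemma is_basis_iff: "is_basis g1 g2 \<longleftrightarrow> g1 \<noteq> 0 \<and> g2 \<noteq> 0 \<and> g1 \<noteq> g2"
  unfolding is_basis_def Ex1_def split_paired_Ex split_paired_All bit_all bit_ex gf4_all
  by (cases g1; cases g2) (simp_all add: gf4_eval)

lemma is_dual_basis_1_w: "is_dual_basis 1 Gw Gw2 1"
  by (simp add: is_dual_basis_def is_basis_iff gf4_eval)

lemma inner_append:
  "length x1 = length y1 \<Longrightarrow> inner (x1 @ x2) (y1 @ y2) = inner x1 y1 + inner x2 y2"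
  by (simp add: inner_def zip_append)

lemma inner_map_map: "inner (map f x) (map g y) = sum_list (map2 (\<lambda>a c. f a * g c) x y)"
  by (simp add: inner_def zip_map1 zip_map2 comp_def case_prod_beta')

lemma inner_scale_left: "inner (map (\<lambda>xi. \<alpha> * xi) x) y = \<alpha> * inner x y"
  by (simp add: inner_def zip_map1 comp_def case_prod_beta' sum_list_const_mult mult.assoc)

definition im_vec :: "gf4 \<Rightarrow> gf4 \<Rightarrow> gf4 list \<Rightarrow> bit list" where
  "im_vec b1 b2 x = map (\<lambda>xi. tr (b1 * xi)) x @ map (\<lambda>xi. tr (b2 * xi)) x"

lemma Im_eq_image_im_vec: "Im b1 b2 C = im_vec b1 b2 ` C"
  by (simp add: Im_def im_vec_def)

lemma inner_im_vec:
  assumes "b1 \<noteq> 0" "b2 \<noteq> 0" "length x = length y"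
  shows "inner (im_vec b1 b2 x) (im_vec b1 b2 y) = tr ((b1^2 + b2^2) * inner x y)"
proof -
  have "inner (im_vec b1 b2 x) (im_vec b1 b2 y)
      = (\<Sum>(a, c)\<leftarrow>zip x y. tr (b1 * a) * tr (b1 * c) + tr (b2 * a) * tr (b2 * c))"
    by (simp del: add_bit_eq_xor mult_bit_eq_and
        add: im_vec_def inner_append inner_map_map assms(3) sum_list_addf case_prod_beta')
  also have "\<dots> = (\<Sum>(a, c)\<leftarrow>zip x y. tr ((b1^2 + b2^2) * a * c))"
    by (simp del: add_bit_eq_xor mult_bit_eq_and add: tr_mult_tr_mult_add assms(1,2))
  also have "\<dots> = tr ((b1^2 + b2^2) * inner x y)"
    by (simp add: inner_def sum_list_const_mult[symmetric] tr_sum_list comp_def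
        case_prod_beta' mult.assoc)
  finally show ?thesis .
qed

lemma self_orthogonal_Im_iff:
  assumes "C \<subseteq> {x. length x = n}" and "scalable C"
    and "b1 \<noteq> 0" "b2 \<noteq> 0" "b1 \<noteq> b2"
  shows "self_orthogonal (Im b1 b2 C) \<longleftrightarrow> self_orthogonal C"
proof -
  define l where "l = b1^2 + b2^2"
  have "l \<noteq> 0"
    unfolding l_def using assms(5) by (rule add_squares_neq_zero)
  have "self_orthogonal (Im b1 b2 C) \<longleftrightarrow> (\<forall>x\<in>C. \<forall>y\<in>C. tr (l * inner x y) = 0)"
    using assms(1) by (auto simp: self_orthogonal_def Im_eq_image_im_vec l_def
        inner_im_vec[OF assms(3,4)] subset_iff)
  also have "\<dots> \<longleftrightarrow> self_orthogonal C"
  proof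
    assume orth: "\<forall>x\<in>C. \<forall>y\<in>C. tr (l * inner x y) = 0"
    show "self_orthogonal C"
      unfolding self_orthogonal_def
    proof (intro ballI)
      fix x y assume "x \<in> C" "y \<in> C"
      have "tr (\<alpha> * inner x y) = 0" for \<alpha>
      proof -
        have "map (\<lambda>xi. (\<alpha> / l) * xi) x \<in> C"
          using \<open>x \<in> C\<close> assms(2) unfolding scalable_def by blast
        then have "tr (l * inner (map (\<lambda>xi. (\<alpha> / l) * xi) x) y) = 0"
          using orth \<open>y \<in> C\<close> by blast
        then have "tr (l * ((\<alpha> / l) * inner x y)) = 0"
          by (simp only: inner_scale_left)
        then show ?thesis
          using \<open>l \<noteq> 0\<close> by simp
      qed
      then show "inner x y = 0"
        by (rule tr_nondegenerate)
    qed
  qed (simp add: self_orthogonal_def)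
  finally show ?thesis .
qed

theorem proposition1:
  fixes C :: "gf4 list set" and n :: nat
  assumes "C \<subseteq> {x. length x = n}"
    and "scalable C"
  shows "((\<exists>g1 g2 b1 b2. is_basis g1 g2 \<and> is_dual_basis g1 g2 b1 b2
              \<and> self_orthogonal (Im b1 b2 C))
          \<longleftrightarrow> (\<forall>g1 g2 b1 b2. is_basis g1 g2 \<and> is_dual_basis g1 g2 b1 b2
              \<longrightarrow> self_orthogonal (Im b1 b2 C)))
       \<and> ((\<forall>g1 g2 b1 b2. is_basis g1 g2 \<and> is_dual_basis g1 g2 b1 b2
              \<longrightarrow> self_orthogonal (Im b1 b2 C))
          \<longleftrightarrow> self_orthogonal C)"
proof -
  have Im_iff: "self_orthogonal (Im b1 b2 C) \<longleftrightarrow> self_orthogonal C"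
    if "is_dual_basis g1 g2 b1 b2" for g1 g2 b1 b2
    using that self_orthogonal_Im_iff[OF assms]
    by (simp add: is_dual_basis_def is_basis_iff)
  have "is_basis 1 Gw \<and> is_dual_basis 1 Gw Gw2 1"
    using is_dual_basis_1_w by (simp add: is_basis_iff gf4_eval)
  then show ?thesis
    using Im_iff by blast
qed

end
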